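(* Let $\mathcal{F}:\mathcal{T}^Y\to\mathcal{T}^Z$ be a cover between trees of spheres, let $v$ be a vertex of $T^Z$ and $e\in E_v$ an edge of $T^Z$ containing $v$. Then $D_e=D_v$, where $D_v:=\sum_{v'\in F^{-1}(v)}\deg(v')$ and $D_e:=\sum_{e'\in F^{-1}(e)}\deg(e')$.
   Context: Trees are finite connected graphs without cycles (vertex set $V$, edges $2$-element subsets of $V$, $E_v$ the set of edges containing $v$); leaves are vertices of valence $1$, the others are internal vertices ($IV$). A tree marked by a finite set $X$ ($\ge3$ elements) is a tree whose set of leaves is $X$. A tree of spheres $\mathcal{T}^X$ consists of a tree $T^X$ marked by $X$ and, for each internal vertex $v$, a topological $2$-sphere $\mathcal{S}_v$ and an injection $i_v:E_v\to\mathcal{S}_v$; $X_v:=i_v(E_v)$. A cover $\mathcal{F}:\mathcal{T}^Y\to\mathcal{T}^Z$ consists of a map $F:T^Y\to T^Z$ sending vertices to vertices and each edge $\{v,w\}$ to the edge $\{F(v),F(w)\}$, with $F(Y)\subseteq Z$ and $F(IV^Y)\subseteq IV^Z$, and for each $v\in IV^Y$, $w=F(v)$, a topological branched covering $f_v:\mathcal{S}_v\to\mathcal{S}_w$ such that (a) $f_v:\mathcal{S}_v\setminus Y_v\to\mathcal{S}_w\setminus Z_w$ is a covering map, (b) $f_v\circ i_v=i_w\circ F$ on $E_v$, (c) for an edge $e=\{v_1,v_2\}$ between internal vertices, $\deg_{i_{v_1}(e)}f_{v_1}=\deg_{i_{v_2}(e)}f_{v_2}$. Degrees: $\deg(v)=\deg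 f_v$ for internal $v$; for an edge $e$ with an internal endpoint $v$, $\deg(e)=\deg_{i_v(e)}f_v$ (well defined by (c)); for a leaf $y$ with its edge $e$, $\deg(y)=\deg(e)$. *)

theory Defs
  imports "HOL-Analysis.Analysis"
begin

definition walk :: "'v set set \<Rightarrow> 'v list \<Rightarrow> bool" where
  "walk E xs \<longleftrightarrow> xs \<noteq> [] \<and> (\<forall>k. Suc k < length xs \<longrightarrow> {xs ! k, xs ! Suc k} \<in> E)"

definition graph_connected :: "'v set \<Rightarrow> 'v set set \<Rightarrow> bool" where
  "graph_connected V E \<longleftrightarrow>
     (\<forall>u\<in>V. \<forall>w\<in>V. \<exists>xs. walk E xs \<and> set xs \<subseteq> V \<and> hd xs = u \<and> last xs = w)"

definition has_cycle :: "'v set set \<Rightarrow> bool" where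
  "has_cycle E \<longleftrightarrow>
     (\<exists>xs. 3 \<le> length xs \<and> distinct xs \<and> walk E xs \<and> {last xs, hd xs} \<in> E)"

definition is_tree :: "'v set \<Rightarrow> 'v set set \<Rightarrow> bool" where
  "is_tree V E \<longleftrightarrow> finite V \<and> V \<noteq> {} \<and>
     (\<forall>e\<in>E. e \<subseteq> V \<and> card e = 2) \<and> graph_connected V E \<and> \<not> has_cycle E"

definition edges_at :: "'v set set \<Rightarrow> 'v \<Rightarrow> 'v set set" where
  "edges_at E v = {e\<in>E. v \<in> e}"

definition valence :: "'v set set \<Rightarrow> 'v \<Rightarrow> nat" where
  "valence E v = card (edges_at E v)"

definition leaves :: "'v set \<Rightarrow> 'v set set \<Rightarrow> 'v set" where
  "leaves V E = {v\<in>V. valence E v = 1}"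

definition internal_vertices :: "'v set \<Rightarrow> 'v set set \<Rightarrow> 'v set" where
  "internal_vertices V E = V - leaves V E"

definition marked_tree :: "'v set \<Rightarrow> 'v set set \<Rightarrow> 'v set \<Rightarrow> bool" where
  "marked_tree V E X \<longleftrightarrow> is_tree V E \<and> leaves V E = X \<and> finite X \<and> 3 \<le> card X"

text \<open>Spheres are realised as subsets (with the subspace topology) of an arbitrary
  topological space type; a topological 2-sphere is a set homeomorphic to the unit
  sphere of \<open>\<real>\<^sup>3\<close>.\<close>

definition topological_2sphere :: "'a::topological_space set \<Rightarrow> bool" where
  "topological_2sphere S \<longleftrightarrow> S homeomorphic (sphere (0::real^3) 1)"

definition tree_of_spheres ::
  "'v set \<Rightarrow> 'v set set \<Rightarrow> 'v set \<Rightarrow> ('v \<Rightarrow> 'a::topological_space set) \<Rightarrow> ('v \<Rightarrow> 'v set \<Rightarrow> 'a) \<Rightarrow> bool" where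
  "tree_of_spheres V E X S i \<longleftrightarrow> marked_tree V E X \<and>
     (\<forall>v\<in>internal_vertices V E.
        topological_2sphere (S v) \<and> inj_on (i v) (edges_at E v) \<and> i v ` edges_at E v \<subseteq> S v)"

definition marked_points :: "'v set set \<Rightarrow> ('v \<Rightarrow> 'v set \<Rightarrow> 'a) \<Rightarrow> 'v \<Rightarrow> 'a set" where
  "marked_points E i v = i v ` edges_at E v"

definition local_model ::
  "('a::topological_space \<Rightarrow> 'b::topological_space) \<Rightarrow> 'a set \<Rightarrow> 'b set \<Rightarrow> 'a \<Rightarrow> nat \<Rightarrow> bool" where
  "local_model f S T p d \<longleftrightarrow> 1 \<le> d \<and>
     (\<exists>U W \<phi> \<phi>' \<psi> \<psi>'. openin (top_of_set S) U \<and> p \<in> U \<and> openin (top_of_set T) W \<and>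
        f ` U = W \<and>
        homeomorphism U (ball (0::complex) 1) \<phi> \<phi>' \<and>
        homeomorphism W (ball (0::complex) 1) \<psi> \<psi>' \<and>
        \<phi> p = 0 \<and> \<psi> (f p) = 0 \<and>
        (\<forall>z\<in>ball 0 1. \<psi> (f (\<phi>' z)) = z ^ d))"

definition branched_covering ::
  "('a::topological_space \<Rightarrow> 'b::topological_space) \<Rightarrow> 'a set \<Rightarrow> 'b set \<Rightarrow> bool" where
  "branched_covering f S T \<longleftrightarrow> continuous_on S f \<and> f ` S = T \<and>
     (\<forall>p\<in>S. \<exists>d. local_model f S T p d)"

definition local_degree ::
  "('a::topological_space \<Rightarrow> 'b::topological_space) \<Rightarrow> 'a set \<Rightarrow> 'b set \<Rightarrow> 'a \<Rightarrow> nat" where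
  "local_degree f S T p = (THE d. local_model f S T p d)"

definition critical_value ::
  "('a::topological_space \<Rightarrow> 'b::topological_space) \<Rightarrow> 'a set \<Rightarrow> 'b set \<Rightarrow> 'b \<Rightarrow> bool" where
  "critical_value f S T q \<longleftrightarrow> (\<exists>p\<in>S. f p = q \<and> local_degree f S T p \<noteq> 1)"

definition bc_degree ::
  "('a::topological_space \<Rightarrow> 'b::topological_space) \<Rightarrow> 'a set \<Rightarrow> 'b set \<Rightarrow> nat" where
  "bc_degree f S T =
     card (S \<inter> f -` {SOME q. q \<in> T \<and> \<not> critical_value f S T q})"

definition tree_cover ::
  "'v set \<Rightarrow> 'v set set \<Rightarrow> 'v set \<Rightarrow> ('v \<Rightarrow> 'a::topological_space set) \<Rightarrow> ('v \<Rightarrow> 'v set \<Rightarrow> 'a) \<Rightarrow>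
   'w set \<Rightarrow> 'w set set \<Rightarrow> 'w set \<Rightarrow> ('w \<Rightarrow> 'b::topological_space set) \<Rightarrow> ('w \<Rightarrow> 'w set \<Rightarrow> 'b) \<Rightarrow>
   ('v \<Rightarrow> 'w) \<Rightarrow> ('v \<Rightarrow> 'a \<Rightarrow> 'b) \<Rightarrow> bool" where
  "tree_cover VY EY Y SY iY VZ EZ Z SZ iZ F f \<longleftrightarrow>
     tree_of_spheres VY EY Y SY iY \<and> tree_of_spheres VZ EZ Z SZ iZ \<and>
     F ` VY \<subseteq> VZ \<and>
     (\<forall>e\<in>EY. F ` e \<in> EZ) \<and>
     F ` Y \<subseteq> Z \<and>
     F ` internal_vertices VY EY \<subseteq> internal_vertices VZ EZ \<and>
     (\<forall>v\<in>internal_vertices VY EY.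
        branched_covering (f v) (SY v) (SZ (F v)) \<and>
        covering_space (SY v - marked_points EY iY v) (f v)
                       (SZ (F v) - marked_points EZ iZ (F v)) \<and>
        (\<forall>e\<in>edges_at EY v. f v (iY v e) = iZ (F v) (F ` e))) \<and>
     (\<forall>e\<in>EY. \<forall>v1\<in>internal_vertices VY EY. \<forall>v2\<in>internal_vertices VY EY.
        e = {v1, v2} \<longrightarrow>
        local_degree (f v1) (SY v1) (SZ (F v1)) (iY v1 e) =
        local_degree (f v2) (SY v2) (SZ (F v2)) (iY v2 e))"

definition edge_degree ::
  "'v set \<Rightarrow> 'v set set \<Rightarrow> ('v \<Rightarrow> 'a::topological_space set) \<Rightarrow> ('v \<Rightarrow> 'v set \<Rightarrow> 'a) \<Rightarrow>
   ('w \<Rightarrow> 'b::topological_space set) \<Rightarrow> ('v \<Rightarrow> 'w) \<Rightarrow> ('v \<Rightarrow> 'a \<Rightarrow> 'b) \<Rightarrow> 'v set \<Rightarrow> nat" where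
  "edge_degree VY EY SY iY SZ F f e =
     (let v = (SOME v. v \<in> e \<and> v \<in> internal_vertices VY EY)
      in local_degree (f v) (SY v) (SZ (F v)) (iY v e))"

definition vertex_degree ::
  "'v set \<Rightarrow> 'v set set \<Rightarrow> ('v \<Rightarrow> 'a::topological_space set) \<Rightarrow> ('v \<Rightarrow> 'v set \<Rightarrow> 'a) \<Rightarrow>
   ('w \<Rightarrow> 'b::topological_space set) \<Rightarrow> ('v \<Rightarrow> 'w) \<Rightarrow> ('v \<Rightarrow> 'a \<Rightarrow> 'b) \<Rightarrow> 'v \<Rightarrow> nat" where
  "vertex_degree VY EY SY iY SZ F f v =
     (if v \<in> internal_vertices VY EY then bc_degree (f v) (SY v) (SZ (F v))
      else edge_degree VY EY SY iY SZ F f (THE e. e \<in> edges_at EY v))"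

end

theory Submission
  imports Defs
begin

text \<open>For an internal vertex \<open>v\<close>, every preimage \<open>v'\<close> is internal, and the edges over \<open>e\<close> at \<open>v'\<close>
  are exactly the points of the fibre of \<open>f\<^sub>v\<^sub>'\<close> over the marked point \<open>i\<^sub>v(e)\<close>. For a branched
  covering between spheres the sum of the local degrees over a fibre does not depend on the point:
  the local normal form \<open>z \<mapsto> z\<^sup>d\<close> makes it locally constant, the target is connected, and at a
  regular value it is the number of preimages, i.e. \<open>deg f\<^sub>v\<^sub>'\<close>. Summing over \<open>v'\<close> gives
  \<open>D\<^sub>e = D\<^sub>v\<close>. For a leaf \<open>v\<close>, every preimage is a leaf whose unique edge lies over \<open>e\<close>; this is a
  bijection, and the degree of a leaf is by definition that of its edge.\<close>

lemma norm_less_of_power_eq: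
  fixes z w :: complex
  assumes "z ^ d = w" "norm w < r ^ d" "r > 0"
  shows "norm z < r"
proof (rule ccontr)
  assume "\<not> norm z < r"
  then have "r ^ d \<le> norm z ^ d" using assms(3) by (intro power_mono) auto
  also have "\<dots> = norm w" using assms(1) by (metis norm_power)
  finally show False using assms(2) by simp
qed

lemma power_chart_fibre:
  assumes \<phi>: "homeomorphism U (ball (0::complex) 1) \<phi> \<phi>'"
    and \<psi>: "homeomorphism W (ball (0::complex) 1) \<psi> \<psi>'"
    and fU: "f ` U \<subseteq> W" and power: "\<forall>z\<in>ball 0 1. \<psi> (f (\<phi>' z)) = z ^ d"
    and w: "w \<in> ball 0 1"
  shows "{x\<in>U. f x = \<psi>' w} = \<phi>' ` {z\<in>ball 0 1. z ^ d = w}"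
proof (intro equalityI subsetI)
  fix x assume x: "x \<in> {x\<in>U. f x = \<psi>' w}"
  then have "\<phi> x \<in> ball 0 1" "\<phi>' (\<phi> x) = x" using \<phi> by (auto simp: homeomorphism_def)
  moreover have "\<psi> (\<psi>' w) = w" using \<psi> w by (simp add: homeomorphism_apply2)
  ultimately show "x \<in> \<phi>' ` {z\<in>ball 0 1. z ^ d = w}"
    using x power by (metis (mono_tags, lifting) image_eqI mem_Collect_eq)
next
  fix x assume "x \<in> \<phi>' ` {z\<in>ball 0 1. z ^ d = w}"
  then obtain z where z: "z \<in> ball 0 1" "z ^ d = w" "x = \<phi>' z" by blast
  then have "x \<in> U" using \<phi> by (auto simp: homeomorphism_def)
  then have "f x = \<psi>' (\<psi> (f x))" using \<psi> fU by (auto simp: homeomorphism_apply1)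
  also have "\<psi> (f x) = w" using power z by simp
  finally show "x \<in> {x\<in>U. f x = \<psi>' w}" using \<open>x \<in> U\<close> by simp
qed

lemma power_chart_small_fibre:
  assumes \<phi>: "homeomorphism U (ball (0::complex) 1) \<phi> \<phi>'"
    and \<psi>: "homeomorphism W (ball (0::complex) 1) \<psi> \<psi>'"
    and fU: "f ` U \<subseteq> W" and power: "\<forall>z\<in>ball 0 1. \<psi> (f (\<phi>' z)) = z ^ d"
    and "1 \<le> d" "0 < r" "r \<le> 1" "norm w < r ^ d" "w \<noteq> 0"
  shows "{x\<in>U. f x = \<psi>' w} \<subseteq> \<phi>' ` ball 0 r" "card {x\<in>U. f x = \<psi>' w} = d"
proof -
  have roots: "{z. z ^ d = w} \<subseteq> ball 0 r" using norm_less_of_power_eq assms(6,8) by auto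
  moreover have "r ^ d \<le> 1" using assms(6,7) by (simp add: power_le_one)
  ultimately have fibre: "{x\<in>U. f x = \<psi>' w} = \<phi>' ` {z. z ^ d = w}"
    using power_chart_fibre[OF \<phi> \<psi> fU power, of w] assms(7,8) by (auto intro!: image_eqI)
  then show "{x\<in>U. f x = \<psi>' w} \<subseteq> \<phi>' ` ball 0 r" using roots by blast
  have "inj_on \<phi>' (ball 0 1)" by (metis \<phi> homeomorphism_apply2 inj_on_inverseI)
  then have "inj_on \<phi>' {z. z ^ d = w}" by (rule inj_on_subset) (use roots assms(7) in fastforce)
  then show "card {x\<in>U. f x = \<psi>' w} = d"
    unfolding fibre using card_nth_roots assms(5,9) by (simp add: card_image)
qed

definition fibre_card_near ::
  "('a::topological_space \<Rightarrow> 'b::topological_space) \<Rightarrow> 'b set \<Rightarrow> 'a set \<Rightarrow> 'b \<Rightarrow> nat \<Rightarrow> bool"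
  where "fibre_card_near f T V q0 d \<longleftrightarrow>
    (\<exists>G. openin (top_of_set T) G \<and> q0 \<in> G \<and> (\<forall>q\<in>G - {q0}. card {x\<in>V. f x = q} = d))"

lemma local_model_fibres:
  assumes "local_model f S T p d"
  obtains U where "openin (top_of_set S) U" "p \<in> U" "{x\<in>U. f x = f p} = {p}"
    "\<forall>V. openin (top_of_set S) V \<and> p \<in> V \<and> V \<subseteq> U \<longrightarrow> fibre_card_near f T V (f p) d"
proof -
  obtain U W \<phi> \<phi>' \<psi> \<psi>' where d: "1 \<le> d" and U: "openin (top_of_set S) U" "p \<in> U"
    and W: "openin (top_of_set T) W" and fU: "f ` U = W"
    and \<phi>: "homeomorphism U (ball (0::complex) 1) \<phi> \<phi>'"
    and \<psi>: "homeomorphism W (ball (0::complex) 1) \<psi> \<psi>'"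
    and p0: "\<phi> p = 0" and fp0: "\<psi> (f p) = 0"
    and power: "\<forall>z\<in>ball 0 1. \<psi> (f (\<phi>' z)) = z ^ d"
    using assms unfolding local_model_def by blast
  have fp: "f p = \<psi>' 0" using \<psi> fU U fp0 by (metis homeomorphism_apply1 image_eqI)
  note fibre = power_chart_fibre[OF \<phi> \<psi> equalityD1[OF fU] power]
  have "{x\<in>U. f x = f p} = \<phi>' ` {0}"
    unfolding fp fibre[of 0, simplified] using d by (auto intro!: image_eqI)
  also have "\<dots> = {p}" using homeomorphism_apply1[OF \<phi> U(2)] p0 by simp
  finally have fibre_p: "{x\<in>U. f x = f p} = {p}" .
  have "fibre_card_near f T V (f p) d" if V: "openin (top_of_set S) V" "p \<in> V" "V \<subseteq> U" for V
  proof -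
    have "open (\<phi> ` V)"
      using homeomorphism_imp_open_map[OF \<phi>] openin_subset_trans[OF V(1,3)] openin_imp_subset[OF U(1)]
      by (meson open_ball openin_open_trans)
    then obtain \<epsilon> where "0 < \<epsilon>" "ball 0 \<epsilon> \<subseteq> \<phi> ` V"
      using p0 V(2) open_contains_ball_eq[of "\<phi> ` V" 0] by (metis image_eqI)
    then obtain r where r: "0 < r" "r \<le> 1" "ball 0 r \<subseteq> \<phi> ` V"
      by (metis min.cobounded1 min.cobounded2 min_less_iff_conj subset_ball subset_trans zero_less_one)
    define G where "G = \<psi>' ` ball 0 (r ^ d)"
    have rd: "r ^ d \<le> 1" using r by (simp add: power_le_one)
    have "openin (top_of_set (ball 0 1)) (ball (0::complex) (r ^ d))"
      using rd by (intro open_subset) auto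
    moreover have "homeomorphism (ball 0 1) W \<psi>' \<psi>" using \<psi> homeomorphism_sym by blast
    ultimately have "openin (top_of_set W) G" unfolding G_def using homeomorphism_imp_open_map by blast
    then have "openin (top_of_set T) G" using W openin_trans by blast
    moreover have "f p \<in> G" unfolding G_def fp using r by simp
    moreover have "card {x\<in>V. f x = q} = d" if q: "q \<in> G - {f p}" for q
    proof -
      obtain w where w: "norm w < r ^ d" "q = \<psi>' w" "w \<noteq> 0" using q fp by (force simp: G_def)
      note small = power_chart_small_fibre[OF \<phi> \<psi> equalityD1[OF fU] power d r(1,2) w(1,3)]
      have "\<phi>' ` ball 0 r \<subseteq> \<phi>' ` \<phi> ` V" using r(3) by (rule image_mono)
      also have "\<phi>' ` \<phi> ` V = V" using V(3) homeomorphism_apply1[OF \<phi>] by force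
      finally have "\<phi>' ` ball 0 r \<subseteq> V" .
      then have "{x\<in>V. f x = q} = {x\<in>U. f x = q}" using small(1) V(3) w(2) by blast
      then show ?thesis using small(2) w(2) by simp
    qed
    ultimately show ?thesis unfolding fibre_card_near_def by blast
  qed
  with U fibre_p that show ?thesis by blast
qed

lemma local_model_value_not_isolated:
  assumes "local_model f S T p d" "openin (top_of_set T) G" "f p \<in> G"
  obtains q where "q \<in> G" "q \<noteq> f p"
proof -
  obtain W \<psi> \<psi>' where W: "openin (top_of_set T) W" "f p \<in> W"
    and \<psi>: "homeomorphism W (ball (0::complex) 1) \<psi> \<psi>'" and fp0: "\<psi> (f p) = 0"
    using assms(1) unfolding local_model_def by blast
  have "openin (top_of_set W) (G \<inter> W)"
    using assms(2) W(1) by (meson inf_le2 openin_Int openin_imp_subset openin_subset_trans)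
  then have "open (\<psi> ` (G \<inter> W))"
    using homeomorphism_imp_open_map[OF \<psi>] by (meson open_ball openin_open_trans)
  then have "\<psi> ` (G \<inter> W) \<noteq> {0}" using not_open_singleton by metis
  moreover have "0 \<in> \<psi> ` (G \<inter> W)" using fp0 assms(3) W(2) by force
  ultimately obtain q where "q \<in> G \<inter> W" "\<psi> q \<noteq> 0" by blast
  then show ?thesis using that fp0 by force
qed

lemma local_model_unique:
  assumes "local_model f S T p d" "local_model f S T p d'"
  shows "d = d'"
proof -
  obtain U where U: "openin (top_of_set S) U" "p \<in> U" and
    count: "\<forall>V. openin (top_of_set S) V \<and> p \<in> V \<and> V \<subseteq> U \<longrightarrow> fibre_card_near f T V (f p) d"
    by (rule local_model_fibres[OF assms(1)]) blast
  obtain U' where U': "openin (top_of_set S) U'" "p \<in> U'" and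
    count': "\<forall>V. openin (top_of_set S) V \<and> p \<in> V \<and> V \<subseteq> U' \<longrightarrow> fibre_card_near f T V (f p) d'"
    by (rule local_model_fibres[OF assms(2)]) blast
  have V: "openin (top_of_set S) (U \<inter> U')" "p \<in> U \<inter> U'" using U U' by auto
  obtain G where "openin (top_of_set T) G" "f p \<in> G" "\<forall>q\<in>G - {f p}. card {x\<in>U \<inter> U'. f x = q} = d"
    using count V unfolding fibre_card_near_def by blast
  moreover obtain G' where "openin (top_of_set T) G'" "f p \<in> G'"
    "\<forall>q\<in>G' - {f p}. card {x\<in>U \<inter> U'. f x = q} = d'"
    using count' V unfolding fibre_card_near_def by blast
  moreover obtain q where "q \<in> G \<inter> G'" "q \<noteq> f p"
    using local_model_value_not_isolated[OF assms(1) openin_Int] calculation by blast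
  ultimately show ?thesis by auto
qed

lemma local_degree_eqI: "local_model f S T p d \<Longrightarrow> local_degree f S T p = d"
  unfolding local_degree_def using local_model_unique by blast

lemma local_model_inj_on_imp_1:
  assumes "local_model f S T p d" "openin (top_of_set S) N" "p \<in> N" "inj_on f N"
  shows "d = 1"
proof -
  obtain U where "openin (top_of_set S) U" "p \<in> U" and
    count: "\<forall>V. openin (top_of_set S) V \<and> p \<in> V \<and> V \<subseteq> U \<longrightarrow> fibre_card_near f T V (f p) d"
    by (rule local_model_fibres[OF assms(1)]) blast
  moreover have "openin (top_of_set S) (U \<inter> N)" "p \<in> U \<inter> N" using assms(2,3) calculation by auto
  ultimately obtain G where G: "openin (top_of_set T) G" "f p \<in> G"
    "\<forall>q\<in>G - {f p}. card {x\<in>U \<inter> N. f x = q} = d"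
    unfolding fibre_card_near_def by blast
  obtain q where "q \<in> G" "q \<noteq> f p" using local_model_value_not_isolated[OF assms(1) G(1,2)] .
  then have card: "card {x\<in>U \<inter> N. f x = q} = d" using G(3) by blast
  have "card {x\<in>U \<inter> N. f x = q} \<le> 1"
    using assms(4) by (cases "finite {x\<in>U \<inter> N. f x = q}") (auto simp: card_le_Suc0_iff_eq inj_on_def)
  moreover have "1 \<le> d" using assms(1) unfolding local_model_def by blast
  ultimately show ?thesis using card by linarith
qed

lemma Hausdorff_space_disjoint_open_nbhds:
  assumes "Hausdorff_space X" "finite P" "P \<subseteq> topspace X"
  obtains V where "\<forall>p\<in>P. openin X (V p) \<and> p \<in> V p" "disjoint_family_on V P"
  using assms(2,3)
proof (induction P arbitrary: thesis rule: finite_induct)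
  case empty
  then show ?case by (auto simp: disjoint_family_on_def)
next
  case (insert a P)
  obtain V where V: "\<forall>p\<in>P. openin X (V p) \<and> p \<in> V p" "disjoint_family_on V P"
    using insert.IH insert.prems(2) by blast
  obtain A B where AB: "openin X A" "openin X B" "{a} \<subseteq> A" "P \<subseteq> B" "disjnt A B"
  proof (rule Hausdorff_space_compact_separation[OF assms(1)])
    show "compactin X {a}" "compactin X P"
      using insert by (simp_all add: finite_imp_compactin_eq)
    show "disjnt {a} P" using insert.hyps(2) by simp
  qed
  define V' where "V' p = (if p = a then A else V p \<inter> B)" for p
  have "\<forall>p\<in>insert a P. openin X (V' p) \<and> p \<in> V' p"
    using V(1) AB insert.hyps(2) by (auto simp: V'_def)
  moreover have "disjoint_family_on V' (insert a P)"
    using V(2) AB(5) insert.hyps(2) by (auto simp: V'_def disjoint_family_on_def disjnt_def)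
  ultimately show ?case using insert.prems(1) by blast
qed

lemma branched_covering_local_model:
  "branched_covering f S T \<Longrightarrow> x \<in> S \<Longrightarrow> local_model f S T x (local_degree f S T x)"
  unfolding branched_covering_def by (metis local_degree_eqI)

lemma branched_covering_local_degree_eq_1:
  assumes "branched_covering f S T" "openin (top_of_set S) N" "x \<in> N" "inj_on f N"
  shows "local_degree f S T x = 1"
  using assms local_model_inj_on_imp_1 branched_covering_local_model openin_imp_subset by blast

lemma branched_covering_finite_fibre:
  assumes bc: "branched_covering f S T" and "compact S" "t1_space (top_of_set T)" "q \<in> T"
  shows "finite {x\<in>S. f x = q}"
proof -
  let ?P = "{x\<in>S. f x = q}"
  have "closedin (top_of_set T) {q}" using assms(3,4) closedin_t1_singleton by fastforce
  then have "closedin (top_of_set S) (S \<inter> f -` {q})"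
    using bc continuous_closedin_preimage_gen unfolding branched_covering_def by blast
  then have "compactin (top_of_set S) ?P"
    using closedin_compact[OF assms(2)] by (simp add: compactin_subtopology Int_def vimage_def)
  moreover have "?P \<inter> top_of_set S derived_set_of ?P = {}"
  proof -
    have "x \<notin> top_of_set S derived_set_of ?P" if "x \<in> ?P" for x
    proof -
      have "x \<in> S" using that by simp
      then obtain U where "openin (top_of_set S) U" "x \<in> U" "{y\<in>U. f y = f x} = {x}"
        by (rule local_model_fibres[OF branched_covering_local_model[OF bc]]) blast
      then show ?thesis using that by (auto simp: derived_set_of_def)
    qed
    then show ?thesis by blast
  qed
  ultimately show ?thesis using discrete_compactin_eq_finite by blast
qed

lemma branched_covering_closedin_image:
  assumes "branched_covering f S T" "compact S" "Hausdorff_space (top_of_set T)"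
    and "closedin (top_of_set S) K"
  shows "closedin (top_of_set T) (f ` K)"
proof -
  have "K \<subseteq> S" "compact K" using assms(2,4) closedin_compact closedin_imp_subset by blast+
  then have "compact (f ` K)" "f ` K \<subseteq> T"
    using assms(1) compact_continuous_image continuous_on_subset unfolding branched_covering_def by blast+
  then show ?thesis using compactin_imp_closedin[OF assms(3)] by (simp add: compactin_subtopology)
qed

lemma branched_covering_fibre_nbhds:
  assumes bc: "branched_covering f S T" and "compact S"
    and "Hausdorff_space (top_of_set S)" "Hausdorff_space (top_of_set T)" "q0 \<in> T"
  obtains V where "disjoint_family_on V {x\<in>S. f x = q0}"
    "\<forall>p\<in>{x\<in>S. f x = q0}. openin (top_of_set S) (V p) \<and> p \<in> V p \<and>
       fibre_card_near f T (V p) q0 (local_degree f S T p)"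
proof -
  let ?P = "{x\<in>S. f x = q0}"
  have "finite ?P"
    using branched_covering_finite_fibre[OF bc] assms Hausdorff_imp_t1_space by blast
  moreover have "?P \<subseteq> topspace (top_of_set S)" by auto
  ultimately obtain W where W: "\<forall>p\<in>?P. openin (top_of_set S) (W p) \<and> p \<in> W p"
    "disjoint_family_on W ?P"
    using Hausdorff_space_disjoint_open_nbhds[OF assms(3)] by blast
  have "\<forall>p\<in>?P. \<exists>U. openin (top_of_set S) U \<and> p \<in> U \<and>
     (\<forall>V. openin (top_of_set S) V \<and> p \<in> V \<and> V \<subseteq> U \<longrightarrow> fibre_card_near f T V q0 (local_degree f S T p))"
  proof
    fix p assume p: "p \<in> ?P"
    then have "p \<in> S" by simp
    then obtain U where "openin (top_of_set S) U" "p \<in> U"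
      "\<forall>V. openin (top_of_set S) V \<and> p \<in> V \<and> V \<subseteq> U \<longrightarrow> fibre_card_near f T V (f p) (local_degree f S T p)"
      by (rule local_model_fibres[OF branched_covering_local_model[OF bc]]) blast
    then show "\<exists>U. openin (top_of_set S) U \<and> p \<in> U \<and>
     (\<forall>V. openin (top_of_set S) V \<and> p \<in> V \<and> V \<subseteq> U \<longrightarrow> fibre_card_near f T V q0 (local_degree f S T p))"
      using p by auto
  qed
  from bchoice[OF this] obtain U where U: "\<forall>p\<in>?P. openin (top_of_set S) (U p) \<and> p \<in> U p \<and>
     (\<forall>V. openin (top_of_set S) V \<and> p \<in> V \<and> V \<subseteq> U p \<longrightarrow> fibre_card_near f T V q0 (local_degree f S T p))"
    by (elim exE) (rule that)
  define V where "V p = U p \<inter> W p" for p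
  have "disjoint_family_on V ?P" using W(2) by (auto simp: V_def disjoint_family_on_def)
  moreover have "\<forall>p\<in>?P. openin (top_of_set S) (V p) \<and> p \<in> V p \<and>
       fibre_card_near f T (V p) q0 (local_degree f S T p)"
    using U W(1) unfolding V_def by blast
  ultimately show ?thesis using that by blast
qed

definition fibre_degree :: "('a::topological_space \<Rightarrow> 'b::topological_space) \<Rightarrow> 'a set \<Rightarrow> 'b set \<Rightarrow> 'b \<Rightarrow> nat"
  where "fibre_degree f S T q = (\<Sum>x\<in>{x\<in>S. f x = q}. local_degree f S T x)"

lemma fibre_degree_eq_card:
  assumes "\<And>x. x \<in> S \<Longrightarrow> f x = q \<Longrightarrow> local_degree f S T x = 1"
  shows "fibre_degree f S T q = card {x\<in>S. f x = q}"
  unfolding fibre_degree_def using assms by simp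

lemma fibre_degree_eq_sum_card:
  assumes "finite P" "disjoint_family_on V P" "\<forall>p\<in>P. V p \<subseteq> S"
    and "{x\<in>S. f x = q} \<subseteq> (\<Union>p\<in>P. V p)" "finite {x\<in>S. f x = q}"
    and "\<And>x. x \<in> S \<Longrightarrow> f x = q \<Longrightarrow> local_degree f S T x = 1"
  shows "fibre_degree f S T q = (\<Sum>p\<in>P. card {x\<in>V p. f x = q})"
proof -
  have fibre: "{x\<in>S. f x = q} = (\<Union>p\<in>P. {x\<in>V p. f x = q})" using assms(3,4) by blast
  then have "\<forall>p\<in>P. finite {x\<in>V p. f x = q}" using assms(1,5) by simp
  have "fibre_degree f S T q = card {x\<in>S. f x = q}" using assms(6) by (rule fibre_degree_eq_card)
  also have "\<dots> = (\<Sum>p\<in>P. card {x\<in>V p. f x = q})"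
    unfolding fibre using assms(1,2) \<open>\<forall>p\<in>P. finite {x\<in>V p. f x = q}\<close>
    by (intro card_UN_disjoint) (auto simp: disjoint_family_on_def)
  finally show ?thesis .
qed

text \<open>Near \<open>q0\<close>, the whole fibre lies in disjoint neighbourhoods \<open>V p\<close> of the points over \<open>q0\<close>
  (the image of the compact complement is closed), and \<open>V p\<close> contains exactly \<open>deg\<^sub>p f\<close>
  preimages, all of local degree 1 once the finitely many branch values are avoided.\<close>

lemma fibre_degree_locally_constant:
  assumes bc: "branched_covering f S T" and "compact S"
    and "Hausdorff_space (top_of_set S)" and HT: "Hausdorff_space (top_of_set T)"
    and "finite B" and unbranched: "\<forall>x\<in>S - B. local_degree f S T x = 1" and "q0 \<in> T"
  obtains G where "openin (top_of_set T) G" "q0 \<in> G" "\<forall>q\<in>G. fibre_degree f S T q = fibre_degree f S T q0"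
proof -
  let ?P = "{x\<in>S. f x = q0}"
  obtain V where disjoint: "disjoint_family_on V ?P" and
    nbhds: "\<forall>p\<in>?P. openin (top_of_set S) (V p) \<and> p \<in> V p \<and> fibre_card_near f T (V p) q0 (local_degree f S T p)"
    by (rule branched_covering_fibre_nbhds[OF bc assms(2-4,7)])
  then have "\<forall>p\<in>?P. \<exists>G. openin (top_of_set T) G \<and> q0 \<in> G \<and>
       (\<forall>q\<in>G - {q0}. card {x\<in>V p. f x = q} = local_degree f S T p)"
    unfolding fibre_card_near_def by blast
  from bchoice[OF this] obtain G where "\<forall>p\<in>?P. openin (top_of_set T) (G p) \<and> q0 \<in> G p \<and>
       (\<forall>q\<in>G p - {q0}. card {x\<in>V p. f x = q} = local_degree f S T p)"
    by (elim exE) (rule that)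
  with disjoint nbhds have V: "disjoint_family_on V ?P"
    "\<forall>p\<in>?P. openin (top_of_set S) (V p) \<and> p \<in> V p \<and> openin (top_of_set T) (G p) \<and> q0 \<in> G p \<and>
       (\<forall>q\<in>G p - {q0}. card {x\<in>V p. f x = q} = local_degree f S T p)"
    by blast+
  have finP: "finite ?P" using branched_covering_finite_fibre[OF bc] assms Hausdorff_imp_t1_space by blast
  define K where "K = S - (\<Union>p\<in>?P. V p)"
  have "openin (top_of_set S) (\<Union>p\<in>?P. V p)" using V(2) by blast
  then have "closedin (top_of_set S) K"
    unfolding K_def by (metis closedin_diff closedin_topspace topspace_euclidean_subtopology)
  then have closed_fK: "closedin (top_of_set T) (f ` K)"
    by (rule branched_covering_closedin_image[OF bc \<open>compact S\<close> HT])
  define FB where "FB = f ` (B \<inter> S) - {q0}"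
  have "closedin (top_of_set T) FB"
    using bc \<open>finite B\<close> HT unfolding FB_def branched_covering_def by (auto intro!: closedin_Hausdorff_finite)
  define H where "H = (\<Inter>p\<in>?P. G p) \<inter> topspace (top_of_set T) - (f ` K \<union> FB)"
  have "openin (top_of_set T) H" unfolding H_def using finP V(2) closed_fK \<open>closedin (top_of_set T) FB\<close>
    by (intro openin_diff openin_INT closedin_Un) auto
  moreover have "q0 \<in> H" unfolding H_def K_def FB_def using V(2) \<open>q0 \<in> T\<close> by auto
  moreover have "fibre_degree f S T q = fibre_degree f S T q0" if "q \<in> H" "q \<noteq> q0" for q
  proof -
    have "q \<notin> f ` K" "q \<in> T" "q \<notin> FB" using that(1) unfolding H_def by auto
    moreover have "\<forall>p\<in>?P. V p \<subseteq> S" using V(2) openin_imp_subset by blast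
    moreover have "finite {x\<in>S. f x = q}"
      using branched_covering_finite_fibre[OF bc \<open>compact S\<close> Hausdorff_imp_t1_space[OF HT]] \<open>q \<in> T\<close> .
    ultimately have "fibre_degree f S T q = (\<Sum>p\<in>?P. card {x\<in>V p. f x = q})"
      using finP V(1) unbranched that(2)
      by (intro fibre_degree_eq_sum_card) (auto simp: K_def FB_def)
    also have "\<dots> = fibre_degree f S T q0"
      unfolding fibre_degree_def using that V(2) unfolding H_def by (intro sum.cong) auto
    finally show ?thesis .
  qed
  ultimately show ?thesis using that by blast
qed

lemma fibre_degree_eq_bc_degree:
  assumes bc: "branched_covering f S T" and "compact S"
    and "Hausdorff_space (top_of_set S)" "Hausdorff_space (top_of_set T)"
    and "finite B" and unbranched: "\<forall>x\<in>S - B. local_degree f S T x = 1"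
    and "connected T" "infinite T" "q \<in> T"
  shows "fibre_degree f S T q = bc_degree f S T"
proof -
  have connected_fibres: "fibre_degree f S T q = fibre_degree f S T q'" if "q' \<in> T" for q'
    using assms(7) \<open>q \<in> T\<close> that
  proof (rule connected_equivalence_relation[where R = "\<lambda>a b. fibre_degree f S T a = fibre_degree f S T b"])
    fix a assume "a \<in> T"
    then obtain G where "openin (top_of_set T) G" "a \<in> G" "\<forall>q\<in>G. fibre_degree f S T q = fibre_degree f S T a"
      by (rule fibre_degree_locally_constant[OF bc assms(2-6)])
    then show "\<exists>G. openin (top_of_set T) G \<and> a \<in> G \<and> (\<forall>x\<in>G. fibre_degree f S T a = fibre_degree f S T x)"
      by (metis (full_types))
  qed simp_all
  have "finite (f ` (B \<inter> S))" using \<open>finite B\<close> by simp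
  then have "\<not> T \<subseteq> f ` (B \<inter> S)" using \<open>infinite T\<close> finite_subset by blast
  then obtain q1 where "q1 \<in> T" "q1 \<notin> f ` (B \<inter> S)" by blast
  then have "\<exists>q. q \<in> T \<and> \<not> critical_value f S T q"
    using unbranched unfolding critical_value_def by blast
  then obtain qs where qs: "qs = (SOME q. q \<in> T \<and> \<not> critical_value f S T q)"
    and regular: "qs \<in> T" "\<not> critical_value f S T qs"
    by (metis (mono_tags, lifting) someI_ex)
  have "fibre_degree f S T qs = card {x\<in>S. f x = qs}"
    using regular(2) unfolding critical_value_def by (intro fibre_degree_eq_card) auto
  also have "{x\<in>S. f x = qs} = S \<inter> f -` {qs}" by auto
  also have "card \<dots> = bc_degree f S T" unfolding bc_degree_def qs ..
  finally show ?thesis using connected_fibres[OF regular(1)] by simp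
qed

lemma infinite_sphere_real3: "infinite (sphere (0::real^3) 1)"
proof
  assume "finite (sphere (0::real^3) 1)"
  moreover have "connected (sphere (0::real^3) 1)" by (rule connected_sphere) simp
  moreover have "axis 1 1 \<in> sphere (0::real^3) 1" "axis 2 1 \<in> sphere (0::real^3) 1" by simp_all
  moreover have "axis 1 1 \<noteq> (axis 2 1 :: real^3)" by (simp add: axis_eq_axis)
  ultimately show False using connected_finite_iff_sing by (metis empty_iff singletonD)
qed

lemma topological_2sphere_compact: "topological_2sphere S \<Longrightarrow> compact S"
  unfolding topological_2sphere_def using homeomorphic_compactness compact_sphere by blast

lemma topological_2sphere_connected: "topological_2sphere S \<Longrightarrow> connected S"
  unfolding topological_2sphere_def
  using homeomorphic_connectedness connected_sphere[of "0::real^3" 1] by auto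

lemma topological_2sphere_infinite: "topological_2sphere S \<Longrightarrow> infinite S"
  unfolding topological_2sphere_def homeomorphic_def homeomorphism_def
  using infinite_sphere_real3 finite_imageI by metis

lemma topological_2sphere_Hausdorff:
  assumes "topological_2sphere S"
  shows "Hausdorff_space (top_of_set S)"
proof -
  obtain g h where "homeomorphism S (sphere (0::real^3) 1) g h"
    using assms unfolding topological_2sphere_def homeomorphic_def by blast
  then have "homeomorphic_maps (top_of_set S) (top_of_set (sphere (0::real^3) 1)) g h"
    unfolding homeomorphic_maps_def homeomorphism_def by (auto simp: Pi_iff)
  then show ?thesis
    using homeomorphic_Hausdorff_space Hausdorff_space_subtopology Hausdorff_space_euclidean
    unfolding homeomorphic_space_def by blast
qed

lemma covering_space_locally_injective:
  assumes "covering_space C f D" "openin (top_of_set S) C" "x \<in> C"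
  obtains N where "openin (top_of_set S) N" "x \<in> N" "inj_on f N"
proof -
  obtain N U g where "x \<in> N" "openin (top_of_set C) N" "homeomorphism N U f g"
    using covering_space_local_homeomorphism[OF assms(1,3)] by metis
  then show ?thesis
    using that assms(2) openin_trans by (metis homeomorphism_apply1 inj_on_inverseI)
qed

lemma branched_covering_unbranched_off:
  assumes "branched_covering f S T" "covering_space (S - B) f D"
    and "finite B" "Hausdorff_space (top_of_set S)"
  shows "\<forall>x\<in>S - B. local_degree f S T x = 1"
proof
  fix x assume "x \<in> S - B"
  have "closedin (top_of_set S) (S \<inter> B)" using assms(3,4) by (simp add: closedin_Hausdorff_finite)
  then have "openin (top_of_set S) (topspace (top_of_set S) - S \<inter> B)" by (rule openin_diff[OF openin_topspace])
  moreover have "topspace (top_of_set S) - S \<inter> B = S - B" by auto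
  ultimately have "openin (top_of_set S) (S - B)" by simp
  then obtain N where "openin (top_of_set S) N" "x \<in> N" "inj_on f N"
    using covering_space_locally_injective[OF assms(2)] \<open>x \<in> S - B\<close> by blast
  then show "local_degree f S T x = 1" using branched_covering_local_degree_eq_1[OF assms(1)] by blast
qed

lemma is_tree_finite_edges: "is_tree V E \<Longrightarrow> finite E"
  unfolding is_tree_def by (metis Pow_iff finite_Pow_iff finite_subset subsetI)

lemma leaf_edges_at:
  assumes "v \<in> leaves V E"
  shows "edges_at E v = {THE e. e \<in> edges_at E v}"
proof -
  have "card (edges_at E v) = 1" using assms by (simp add: leaves_def valence_def)
  then obtain e where "edges_at E v = {e}" by (rule card_1_singletonE)
  then show ?thesis by simp
qed

lemma sum_edges_over_edge_by_endpoint: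
  assumes "finite V" "finite E" "\<forall>e'\<in>E. e' \<subseteq> V \<and> inj_on F e'" "v \<in> e"
  shows "(\<Sum>e'\<in>{e'\<in>E. F ` e' = e}. g e') = (\<Sum>v'\<in>{v'\<in>V. F v' = v}. \<Sum>e'\<in>{e'\<in>edges_at E v'. F ` e' = e}. g e')"
proof -
  have "{e'\<in>E. F ` e' = e} = (\<Union>v'\<in>{v'\<in>V. F v' = v}. {e'\<in>edges_at E v'. F ` e' = e})"
    using assms(3,4) by (auto simp: edges_at_def)
  moreover have "{e'\<in>edges_at E v'. F ` e' = e} \<inter> {e'\<in>edges_at E v''. F ` e' = e} = {}"
    if "F v' = v" "F v'' = v" "v' \<noteq> v''" for v' v''
    using assms(3) that by (auto simp: edges_at_def inj_on_def)
  ultimately show ?thesis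
    using assms(1,2) by (simp add: sum.UNION_disjoint edges_at_def)
qed

context
  fixes VY :: "'v set" and EY :: "'v set set" and Y :: "'v set"
    and SY :: "'v \<Rightarrow> 'a::topological_space set" and iY :: "'v \<Rightarrow> 'v set \<Rightarrow> 'a"
    and VZ :: "'w set" and EZ :: "'w set set" and Z :: "'w set"
    and SZ :: "'w \<Rightarrow> 'b::topological_space set" and iZ :: "'w \<Rightarrow> 'w set \<Rightarrow> 'b"
    and F :: "'v \<Rightarrow> 'w" and f :: "'v \<Rightarrow> 'a \<Rightarrow> 'b"
  assumes cover: "tree_cover VY EY Y SY iY VZ EZ Z SZ iZ F f"
begin

lemma tree_cover_trees: "is_tree VY EY" "is_tree VZ EZ"
  using cover by (simp_all add: tree_cover_def tree_of_spheres_def marked_tree_def)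

lemma tree_cover_inj_on_edge:
  assumes "e' \<in> EY"
  shows "inj_on F e'"
proof (rule eq_card_imp_inj_on)
  have "F ` e' \<in> EZ" using cover assms by (simp add: tree_cover_def)
  then show "card (F ` e') = card e'"
    using tree_cover_trees assms unfolding is_tree_def by simp
  show "finite e'" using tree_cover_trees assms unfolding is_tree_def by (metis card.infinite zero_neq_numeral)
qed

lemma tree_cover_leaves: "F ` leaves VY EY \<subseteq> leaves VZ EZ"
  using cover by (simp add: tree_cover_def tree_of_spheres_def marked_tree_def)

lemma tree_cover_internal_vertices: "F ` internal_vertices VY EY \<subseteq> internal_vertices VZ EZ"
  using cover by (simp add: tree_cover_def)

lemma tree_cover_internal_preimage:
  "v' \<in> VY \<Longrightarrow> F v' \<in> internal_vertices VZ EZ \<Longrightarrow> v' \<in> internal_vertices VY EY"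
  using tree_cover_leaves unfolding internal_vertices_def by blast

lemma tree_cover_leaf_preimage:
  "v' \<in> VY \<Longrightarrow> F v' \<notin> internal_vertices VZ EZ \<Longrightarrow> v' \<in> leaves VY EY"
  using tree_cover_internal_vertices unfolding internal_vertices_def by blast

text \<open>\<open>edge_degree\<close> reads the local degree at an internal endpoint chosen by \<open>SOME\<close>; condition (c) of
  a cover makes the choice irrelevant.\<close>

lemma tree_cover_edge_degree:
  assumes "e' \<in> EY" "u \<in> e'" "u \<in> internal_vertices VY EY"
  shows "edge_degree VY EY SY iY SZ F f e' = local_degree (f u) (SY u) (SZ (F u)) (iY u e')"
proof -
  define u0 where "u0 = (SOME u. u \<in> e' \<and> u \<in> internal_vertices VY EY)"
  have u0: "u0 \<in> e'" "u0 \<in> internal_vertices VY EY"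
    using someI[of "\<lambda>u. u \<in> e' \<and> u \<in> internal_vertices VY EY", OF conjI[OF assms(2,3)]]
    unfolding u0_def by blast+
  have "local_degree (f u0) (SY u0) (SZ (F u0)) (iY u0 e') = local_degree (f u) (SY u) (SZ (F u)) (iY u e')"
  proof (cases "u0 = u")
    case False
    have "card e' = 2" using tree_cover_trees(1) assms(1) unfolding is_tree_def by blast
    then have "e' = {u0, u}" using u0(1) assms(2) False by (auto simp: card_2_iff)
    moreover have "\<forall>e\<in>EY. \<forall>v1\<in>internal_vertices VY EY. \<forall>v2\<in>internal_vertices VY EY. e = {v1, v2} \<longrightarrow>
        local_degree (f v1) (SY v1) (SZ (F v1)) (iY v1 e) = local_degree (f v2) (SY v2) (SZ (F v2)) (iY v2 e)"
      using cover unfolding tree_cover_def by (elim conjE) assumption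
    ultimately show ?thesis using assms(1,3) u0(2) by blast
  qed simp
  then show ?thesis unfolding edge_degree_def Let_def u0_def .
qed

lemma tree_cover_marked_fibre:
  assumes v': "v' \<in> internal_vertices VY EY" and e: "e \<in> edges_at EZ (F v')"
  shows "{x\<in>SY v'. f v' x = iZ (F v') e} = iY v' ` {e'\<in>edges_at EY v'. F ` e' = e}"
proof (intro equalityI subsetI)
  have "F v' \<in> internal_vertices VZ EZ" using tree_cover_internal_vertices v' by blast
  then have cov: "covering_space (SY v' - marked_points EY iY v') (f v') (SZ (F v') - marked_points EZ iZ (F v'))"
    and compat: "\<forall>e'\<in>edges_at EY v'. f v' (iY v' e') = iZ (F v') (F ` e')"
    and inj: "inj_on (iZ (F v')) (edges_at EZ (F v'))"
    using cover v' by (simp_all add: tree_cover_def tree_of_spheres_def)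
  fix x assume x: "x \<in> {x\<in>SY v'. f v' x = iZ (F v') e}"
  have "x \<in> marked_points EY iY v'"
  proof (rule ccontr)
    assume "x \<notin> marked_points EY iY v'"
    then have "f v' x \<in> SZ (F v') - marked_points EZ iZ (F v')"
      using x covering_space_imp_surjective[OF cov] by blast
    moreover have "iZ (F v') e \<in> marked_points EZ iZ (F v')" using e by (simp add: marked_points_def)
    ultimately show False using x by simp
  qed
  then obtain e' where e': "e' \<in> edges_at EY v'" "x = iY v' e'" by (auto simp: marked_points_def)
  have "F ` e' \<in> EZ" using cover e' by (simp add: tree_cover_def edges_at_def)
  then have "F ` e' \<in> edges_at EZ (F v')" using e'(1) by (auto simp: edges_at_def)
  then have "F ` e' = e" using inj e compat e' x by (auto dest: inj_onD)
  then show "x \<in> iY v' ` {e'\<in>edges_at EY v'. F ` e' = e}" using e' by blast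
next
  have compat: "\<forall>e'\<in>edges_at EY v'. f v' (iY v' e') = iZ (F v') (F ` e')"
    and "iY v' ` edges_at EY v' \<subseteq> SY v'"
    using cover v' by (simp_all add: tree_cover_def tree_of_spheres_def)
  then show "x \<in> {x\<in>SY v'. f v' x = iZ (F v') e}" if "x \<in> iY v' ` {e'\<in>edges_at EY v'. F ` e' = e}" for x
    using that by auto
qed


lemma tree_cover_local_degree_sum:
  assumes v': "v' \<in> internal_vertices VY EY" and e: "e \<in> edges_at EZ (F v')"
  shows "(\<Sum>e'\<in>{e'\<in>edges_at EY v'. F ` e' = e}. local_degree (f v') (SY v') (SZ (F v')) (iY v' e'))
       = bc_degree (f v') (SY v') (SZ (F v'))"
proof -
  have "F v' \<in> internal_vertices VZ EZ" using tree_cover_internal_vertices v' by blast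
  then have bc: "branched_covering (f v') (SY v') (SZ (F v'))"
    and cov: "covering_space (SY v' - marked_points EY iY v') (f v') (SZ (F v') - marked_points EZ iZ (F v'))"
    and spheres: "topological_2sphere (SY v')" "topological_2sphere (SZ (F v'))"
    and inj: "inj_on (iY v') (edges_at EY v')" and "iZ (F v') ` edges_at EZ (F v') \<subseteq> SZ (F v')"
    using cover v' by (simp_all add: tree_cover_def tree_of_spheres_def)
  then have q: "iZ (F v') e \<in> SZ (F v')" using e by blast
  have finite_marked: "finite (marked_points EY iY v')"
    using is_tree_finite_edges[OF tree_cover_trees(1)] by (simp add: marked_points_def edges_at_def)
  note unbranched = branched_covering_unbranched_off[OF bc cov this topological_2sphere_Hausdorff[OF spheres(1)]]
  have "(\<Sum>e'\<in>{e'\<in>edges_at EY v'. F ` e' = e}. local_degree (f v') (SY v') (SZ (F v')) (iY v' e'))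
      = fibre_degree (f v') (SY v') (SZ (F v')) (iZ (F v') e)"
    unfolding fibre_degree_def tree_cover_marked_fibre[OF assms]
    by (rule sum.reindex[symmetric, unfolded comp_def]) (rule inj_on_subset[OF inj], blast)
  also have "\<dots> = bc_degree (f v') (SY v') (SZ (F v'))"
    using spheres by (intro fibre_degree_eq_bc_degree[OF bc _ _ _ finite_marked unbranched _ _ q]
        topological_2sphere_compact topological_2sphere_Hausdorff topological_2sphere_connected
        topological_2sphere_infinite)
  finally show ?thesis .
qed


lemma tree_cover_edge_sum_internal:
  assumes v: "v \<in> internal_vertices VZ EZ" and e: "e \<in> edges_at EZ v"
  shows "(\<Sum>e'\<in>{e'\<in>EY. F ` e' = e}. edge_degree VY EY SY iY SZ F f e')
       = (\<Sum>v'\<in>{v'\<in>VY. F v' = v}. vertex_degree VY EY SY iY SZ F f v')"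
proof -
  have "(\<Sum>e'\<in>{e'\<in>EY. F ` e' = e}. edge_degree VY EY SY iY SZ F f e')
      = (\<Sum>v'\<in>{v'\<in>VY. F v' = v}. \<Sum>e'\<in>{e'\<in>edges_at EY v'. F ` e' = e}. edge_degree VY EY SY iY SZ F f e')"
    using tree_cover_trees(1) is_tree_finite_edges[OF tree_cover_trees(1)] tree_cover_inj_on_edge e
    by (intro sum_edges_over_edge_by_endpoint) (auto simp: is_tree_def edges_at_def)
  also have "\<dots> = (\<Sum>v'\<in>{v'\<in>VY. F v' = v}. vertex_degree VY EY SY iY SZ F f v')"
  proof (rule sum.cong[OF refl])
    fix v' assume "v' \<in> {v'\<in>VY. F v' = v}"
    then have v': "v' \<in> internal_vertices VY EY" "F v' = v" using tree_cover_internal_preimage v by auto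
    have "(\<Sum>e'\<in>{e'\<in>edges_at EY v'. F ` e' = e}. edge_degree VY EY SY iY SZ F f e')
        = (\<Sum>e'\<in>{e'\<in>edges_at EY v'. F ` e' = e}. local_degree (f v') (SY v') (SZ (F v')) (iY v' e'))"
      using v'(1) by (intro sum.cong) (auto simp: edges_at_def intro: tree_cover_edge_degree)
    also have "\<dots> = bc_degree (f v') (SY v') (SZ (F v'))"
      using e v'(2) by (intro tree_cover_local_degree_sum[OF v'(1)]) simp
    also have "\<dots> = vertex_degree VY EY SY iY SZ F f v'"
      using v'(1) by (simp add: vertex_degree_def)
    finally show "(\<Sum>e'\<in>{e'\<in>edges_at EY v'. F ` e' = e}. edge_degree VY EY SY iY SZ F f e')
        = vertex_degree VY EY SY iY SZ F f v'" .
  qed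
  finally show ?thesis .
qed

lemma tree_cover_edge_sum_leaf:
  assumes v: "v \<in> leaves VZ EZ" and e: "e \<in> edges_at EZ v"
  shows "(\<Sum>e'\<in>{e'\<in>EY. F ` e' = e}. edge_degree VY EY SY iY SZ F f e')
       = (\<Sum>v'\<in>{v'\<in>VY. F v' = v}. vertex_degree VY EY SY iY SZ F f v')"
proof -
  let ?edge = "\<lambda>v'. THE e'. e' \<in> edges_at EY v'"
  have leaf: "v' \<in> leaves VY EY" if "v' \<in> VY" "F v' = v" for v'
    using tree_cover_leaf_preimage that v by (simp add: internal_vertices_def)
  have edge: "edges_at EY v' = {?edge v'}" if "v' \<in> VY" "F v' = v" for v'
    using leaf_edges_at[OF leaf[OF that]] .
  have edge_v: "edges_at EZ v = {e}" using leaf_edges_at[OF v] e by auto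
  have "bij_betw ?edge {v'\<in>VY. F v' = v} {e'\<in>EY. F ` e' = e}"
  proof (rule bij_betw_imageI)
    show "inj_on ?edge {v'\<in>VY. F v' = v}"
    proof (rule inj_onI)
      fix a b assume a: "a \<in> {v'\<in>VY. F v' = v}" and b: "b \<in> {v'\<in>VY. F v' = v}" and "?edge a = ?edge b"
      then have "a \<in> ?edge a" "b \<in> ?edge a" "?edge a \<in> EY" using edge by (auto simp: edges_at_def)
      then show "a = b" using tree_cover_inj_on_edge a b by (auto dest: inj_onD)
    qed
    show "?edge ` {v'\<in>VY. F v' = v} = {e'\<in>EY. F ` e' = e}"
    proof (intro equalityI subsetI)
      fix e' assume "e' \<in> ?edge ` {v'\<in>VY. F v' = v}"
      then obtain v' where v': "v' \<in> VY" "F v' = v" "e' = ?edge v'" by blast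
      then have "e' \<in> EY" "v' \<in> e'" using edge[OF v'(1,2)] by (auto simp: edges_at_def)
      moreover have "F ` e' \<in> EZ" using cover calculation(1) by (simp add: tree_cover_def)
      ultimately have "F ` e' \<in> edges_at EZ v" using v'(2) by (auto simp: edges_at_def)
      then show "e' \<in> {e'\<in>EY. F ` e' = e}" using edge_v \<open>e' \<in> EY\<close> by simp
    next
      fix e' assume e': "e' \<in> {e'\<in>EY. F ` e' = e}"
      moreover have "v \<in> e" using e by (simp add: edges_at_def)
      ultimately obtain a where a: "a \<in> e'" "F a = v" by auto
      then have "a \<in> VY" using tree_cover_trees(1) e' by (auto simp: is_tree_def)
      moreover have "e' \<in> edges_at EY a" using e' a(1) by (simp add: edges_at_def)
      ultimately have "e' = ?edge a" using edge[OF _ a(2)] by blast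
      then show "e' \<in> ?edge ` {v'\<in>VY. F v' = v}" using \<open>a \<in> VY\<close> a(2) by blast
    qed
  qed
  then have "(\<Sum>e'\<in>{e'\<in>EY. F ` e' = e}. edge_degree VY EY SY iY SZ F f e')
      = (\<Sum>v'\<in>{v'\<in>VY. F v' = v}. edge_degree VY EY SY iY SZ F f (?edge v'))"
    by (rule sum.reindex_bij_betw[symmetric])
  also have "\<dots> = (\<Sum>v'\<in>{v'\<in>VY. F v' = v}. vertex_degree VY EY SY iY SZ F f v')"
    using leaf by (intro sum.cong) (auto simp: vertex_degree_def internal_vertices_def)
  finally show ?thesis .
qed

end

theorem lemma2p19:
  fixes VY :: "'v set" and EY :: "'v set set" and Y :: "'v set"
    and SY :: "'v \<Rightarrow> 'a::topological_space set" and iY :: "'v \<Rightarrow> 'v set \<Rightarrow> 'a"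
    and VZ :: "'w set" and EZ :: "'w set set" and Z :: "'w set"
    and SZ :: "'w \<Rightarrow> 'b::topological_space set" and iZ :: "'w \<Rightarrow> 'w set \<Rightarrow> 'b"
    and F :: "'v \<Rightarrow> 'w" and f :: "'v \<Rightarrow> 'a \<Rightarrow> 'b"
    and v :: 'w and e :: "'w set"
  assumes "tree_cover VY EY Y SY iY VZ EZ Z SZ iZ F f"
    and "v \<in> VZ"
    and "e \<in> edges_at EZ v"
  shows "(\<Sum>e'\<in>{e'\<in>EY. F ` e' = e}. edge_degree VY EY SY iY SZ F f e')
       = (\<Sum>v'\<in>{v'\<in>VY. F v' = v}. vertex_degree VY EY SY iY SZ F f v')"
proof (cases "v \<in> internal_vertices VZ EZ")
  case True
  show ?thesis by (rule tree_cover_edge_sum_internal[OF assms(1) True assms(3)])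
next
  case False
  then have "v \<in> leaves VZ EZ" using assms(2) by (simp add: internal_vertices_def)
  then show ?thesis using tree_cover_edge_sum_leaf[OF assms(1) _ assms(3)] by blast
qed

end
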